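(* Let $(r,s)\in\{0,\dots,m\}\times\{1,\dots,n\}$ and let $\mathcal{S}$ be an $(r,s)$-decomposed subspace of $\mathrm{Mat}_{m,n}(\mathbb{K})$ with the column property. Then the lower space of $\mathcal{S}$ has the column property.
   Context: Matrix spaces are equivalent ($\sim$) if $\mathcal{M}=P\mathcal{M}'Q$ with $P,Q$ invertible. A subspace is defective if none of its matrices has rank equal to its number of columns. $\mathcal{S}\subseteq\mathrm{Mat}_{m,n}(\mathbb{K})$ is $(r,s)$-decomposed ($0\le r\le m$, $1\le s\le n$) if every $M\in\mathcal{S}$ is of the form $\begin{bmatrix} ?_{r\times s}& C(M)\\ B(M)&0_{(m-r)\times(n-s)}\end{bmatrix}$ with $B(M)\in\mathrm{Mat}_{m-r,s}(\mathbb{K})$; its lower space is $B(\mathcal{S})$. $\mathcal{S}$ has the column property if for every such $(r,s)$ and every $(r,s)$-decomposed $\mathcal{S}'\sim\mathcal{S}$, the lower space of $\mathcal{S}'$ is defective. *)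

theory Defs
  imports "Jordan_Normal_Form.DL_Rank"
begin

definition mat_rank :: "nat \<Rightarrow> 'a::field mat \<Rightarrow> nat" where
  "mat_rank m A = vec_space.rank m A"

definition is_subspace :: "nat \<Rightarrow> nat \<Rightarrow> 'a::field mat set \<Rightarrow> bool" where
  "is_subspace m n S \<longleftrightarrow> S \<subseteq> carrier_mat m n \<and> 0\<^sub>m m n \<in> S \<and>
     (\<forall>A\<in>S. \<forall>B\<in>S. A + B \<in> S) \<and> (\<forall>c. \<forall>A\<in>S. c \<cdot>\<^sub>m A \<in> S)"

definition mat_space_equiv :: "nat \<Rightarrow> nat \<Rightarrow> 'a::field mat set \<Rightarrow> 'a mat set \<Rightarrow> bool" where
  "mat_space_equiv m n S S' \<longleftrightarrow>
     (\<exists>P Q. P \<in> carrier_mat m m \<and> invertible_mat P \<and> Q \<in> carrier_mat n n \<and> invertible_mat Q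
        \<and> S = (\<lambda>M. P * M * Q) ` S')"

definition defective :: "nat \<Rightarrow> nat \<Rightarrow> 'a::field mat set \<Rightarrow> bool" where
  "defective m n S \<longleftrightarrow> (\<forall>M\<in>S. mat_rank m M \<noteq> n)"

definition decomposed :: "nat \<Rightarrow> nat \<Rightarrow> nat \<Rightarrow> nat \<Rightarrow> 'a::field mat set \<Rightarrow> bool" where
  "decomposed m n r s S \<longleftrightarrow> r \<le> m \<and> 1 \<le> s \<and> s \<le> n \<and>
     (\<forall>M\<in>S. \<forall>i j. r \<le> i \<and> i < m \<and> s \<le> j \<and> j < n \<longrightarrow> M $$ (i, j) = 0)"

definition lower_block :: "nat \<Rightarrow> nat \<Rightarrow> nat \<Rightarrow> 'a mat \<Rightarrow> 'a mat" where
  "lower_block m r s M = mat (m - r) s (\<lambda>(i, j). M $$ (i + r, j))"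

definition lower_space :: "nat \<Rightarrow> nat \<Rightarrow> nat \<Rightarrow> 'a mat set \<Rightarrow> 'a mat set" where
  "lower_space m r s S = lower_block m r s ` S"

definition column_property :: "nat \<Rightarrow> nat \<Rightarrow> 'a::field mat set \<Rightarrow> bool" where
  "column_property m n S \<longleftrightarrow>
     (\<forall>r s S'. r \<le> m \<and> 1 \<le> s \<and> s \<le> n \<and> mat_space_equiv m n S' S
        \<and> decomposed m n r s S' \<longrightarrow> defective (m - r) s (lower_space m r s S'))"

end

theory Submission
  imports Defs
begin

text \<open>Any equivalence \<open>B \<mapsto> P B Q\<close> of the lower space extends to the equivalence
  \<open>M \<mapsto> diag(1, P) M diag(Q, 1)\<close> of the whole space, which preserves the zero block and acts on
  the lower block by \<open>B \<mapsto> P B Q\<close>. Hence an \<open>(r', s')\<close>-decomposed space equivalent to the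
  lower space of \<open>S\<close> has the same lower space as some \<open>(r + r', s')\<close>-decomposed space
  equivalent to \<open>S\<close>, and that lower space is defective by the column property of \<open>S\<close>.\<close>

lemma invertible_mat_obtain_inverse:
  assumes "A \<in> carrier_mat n n" "invertible_mat A"
  obtains B where "B \<in> carrier_mat n n" "A * B = 1\<^sub>m n" "B * A = 1\<^sub>m n"
proof -
  from assms obtain B where "inverts_mat A B" "inverts_mat B A"
    unfolding invertible_mat_def by auto
  then have AB: "A * B = 1\<^sub>m n" and BA: "B * A = 1\<^sub>m (dim_row B)"
    using assms(1) unfolding inverts_mat_def by auto
  have "dim_col B = n" using AB by (metis index_mult_mat(3) index_one_mat(3))
  moreover have "dim_row B = n" using BA assms(1)
    by (metis carrier_matD(2) index_mult_mat(3) index_one_mat(3))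
  ultimately show ?thesis using that AB BA by auto
qed

lemma invertible_mat_one: "invertible_mat (1\<^sub>m n :: 'a::semiring_1 mat)"
  unfolding invertible_mat_def inverts_mat_def by (intro conjI exI[of _ "1\<^sub>m n"]) auto

lemma invertible_mat_four_block_diag:
  fixes A D :: "'a::field mat"
  assumes "A \<in> carrier_mat a a" "invertible_mat A" "D \<in> carrier_mat d d" "invertible_mat D"
  shows "invertible_mat (four_block_mat A (0\<^sub>m a d) (0\<^sub>m d a) D)"
proof -
  obtain A' where A': "A' \<in> carrier_mat a a" "A * A' = 1\<^sub>m a" "A' * A = 1\<^sub>m a"
    using invertible_mat_obtain_inverse[OF assms(1,2)] .
  obtain D' where D': "D' \<in> carrier_mat d d" "D * D' = 1\<^sub>m d" "D' * D = 1\<^sub>m d"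
    using invertible_mat_obtain_inverse[OF assms(3,4)] .
  let ?M = "four_block_mat A (0\<^sub>m a d) (0\<^sub>m d a) D"
  let ?M' = "four_block_mat A' (0\<^sub>m a d) (0\<^sub>m d a) D'"
  have "?M * ?M' = 1\<^sub>m (a + d)"
    using assms A' D' by (subst mult_four_block_mat) auto
  moreover have "?M' * ?M = 1\<^sub>m (a + d)"
    using assms A' D' by (subst mult_four_block_mat) auto
  ultimately show ?thesis unfolding invertible_mat_def inverts_mat_def
    using assms(1,3) A'(1) D'(1) by (intro conjI exI[of _ ?M']) auto
qed

lemma four_block_diag_mult_four_block_mat:
  fixes A C B P Q :: "'a::field mat"
  assumes "A \<in> carrier_mat r s" "C \<in> carrier_mat r c" "B \<in> carrier_mat d s"
    and "P \<in> carrier_mat d d" "Q \<in> carrier_mat s s"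
  shows "four_block_mat (1\<^sub>m r) (0\<^sub>m r d) (0\<^sub>m d r) P * four_block_mat A C B (0\<^sub>m d c) *
      four_block_mat Q (0\<^sub>m s c) (0\<^sub>m c s) (1\<^sub>m c)
    = four_block_mat (A * Q) C (P * B * Q) (0\<^sub>m d c)"
proof -
  have "four_block_mat (1\<^sub>m r) (0\<^sub>m r d) (0\<^sub>m d r) P * four_block_mat A C B (0\<^sub>m d c)
      = four_block_mat A C (P * B) (0\<^sub>m d c)"
    using assms by (subst mult_four_block_mat) auto
  also have "\<dots> * four_block_mat Q (0\<^sub>m s c) (0\<^sub>m c s) (1\<^sub>m c)
      = four_block_mat (A * Q) C (P * B * Q) (0\<^sub>m d c)"
    using assms by (subst mult_four_block_mat) auto
  finally show ?thesis .
qed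

lemma four_block_mat_split_zero_block:
  fixes M :: "'a::zero mat"
  assumes "M \<in> carrier_mat m n" "r \<le> m" "s \<le> n"
    and "\<And>i j. r \<le> i \<Longrightarrow> i < m \<Longrightarrow> s \<le> j \<Longrightarrow> j < n \<Longrightarrow> M $$ (i, j) = 0"
  shows "M = four_block_mat (mat r s (\<lambda>(i, j). M $$ (i, j))) (mat r (n - s) (\<lambda>(i, j). M $$ (i, j + s)))
     (lower_block m r s M) (0\<^sub>m (m - r) (n - s))"
  using assms unfolding lower_block_def by (intro eq_matI) auto

lemma lower_block_carrier_mat: "lower_block m r s M \<in> carrier_mat (m - r) s"
  unfolding lower_block_def by auto

lemma index_lower_block [simp]:
  "dim_row (lower_block m r s M) = m - r" "dim_col (lower_block m r s M) = s"
  "i < m - r \<Longrightarrow> j < s \<Longrightarrow> lower_block m r s M $$ (i, j) = M $$ (i + r, j)"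
  unfolding lower_block_def by auto

lemma four_block_diag_mult_index_lower:
  fixes M P Q :: "'a::field mat"
  assumes "M \<in> carrier_mat m n" "r \<le> m" "s \<le> n"
    and "\<And>i j. r \<le> i \<Longrightarrow> i < m \<Longrightarrow> s \<le> j \<Longrightarrow> j < n \<Longrightarrow> M $$ (i, j) = 0"
    and P: "P \<in> carrier_mat (m - r) (m - r)" and Q: "Q \<in> carrier_mat s s"
    and "r \<le> i" "i < m" "j < n"
  shows "(four_block_mat (1\<^sub>m r) (0\<^sub>m r (m - r)) (0\<^sub>m (m - r) r) P * M *
      four_block_mat Q (0\<^sub>m s (n - s)) (0\<^sub>m (n - s) s) (1\<^sub>m (n - s))) $$ (i, j)
    = (if j < s then (P * lower_block m r s M * Q) $$ (i - r, j) else 0)"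
proof -
  let ?A = "mat r s (\<lambda>(i, j). M $$ (i, j))" and ?C = "mat r (n - s) (\<lambda>(i, j). M $$ (i, j + s))"
  have split: "M = four_block_mat ?A ?C (lower_block m r s M) (0\<^sub>m (m - r) (n - s))"
    by (rule four_block_mat_split_zero_block[OF assms(1-4)])
  have "four_block_mat (1\<^sub>m r) (0\<^sub>m r (m - r)) (0\<^sub>m (m - r) r) P *
      four_block_mat ?A ?C (lower_block m r s M) (0\<^sub>m (m - r) (n - s)) *
      four_block_mat Q (0\<^sub>m s (n - s)) (0\<^sub>m (n - s) s) (1\<^sub>m (n - s))
    = four_block_mat (?A * Q) ?C (P * lower_block m r s M * Q) (0\<^sub>m (m - r) (n - s))"
    by (rule four_block_diag_mult_four_block_mat[OF _ _ lower_block_carrier_mat P Q]) auto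
  then show ?thesis
    using assms by (simp only: split[symmetric]) (auto simp del: index_mult_mat(1))
qed

lemma decomposed_lift_of_lower_space_equiv:
  fixes S T :: "'a::field mat set"
  assumes "r \<le> m" "s \<le> n" and S: "S \<subseteq> carrier_mat m n" "decomposed m n r s S"
    and equiv: "mat_space_equiv (m - r) s T (lower_space m r s S)"
    and T: "decomposed (m - r) s r' s' T"
  obtains S' where "mat_space_equiv m n S' S" "decomposed m n (r + r') s' S'"
    "lower_space m (r + r') s' S' = lower_space (m - r) r' s' T"
proof -
  from equiv obtain P Q where P: "P \<in> carrier_mat (m - r) (m - r)" "invertible_mat P"
    and Q: "Q \<in> carrier_mat s s" "invertible_mat Q"
    and T_eq: "T = (\<lambda>M. P * M * Q) ` lower_space m r s S"
    unfolding mat_space_equiv_def by blast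
  define P' where "P' = four_block_mat (1\<^sub>m r) (0\<^sub>m r (m - r)) (0\<^sub>m (m - r) r) P"
  define Q' where "Q' = four_block_mat Q (0\<^sub>m s (n - s)) (0\<^sub>m (n - s) s) (1\<^sub>m (n - s))"
  have lower_entry: "(P' * M * Q') $$ (i, j) = (if j < s then (P * lower_block m r s M * Q) $$ (i - r, j) else 0)"
    if "M \<in> S" "r \<le> i" "i < m" "j < n" for M i j
    unfolding P'_def Q'_def using that S assms(1,2) P(1) Q(1) unfolding decomposed_def
    by (intro four_block_diag_mult_index_lower) auto
  have "invertible_mat P'"
    unfolding P'_def by (rule invertible_mat_four_block_diag[OF one_carrier_mat invertible_mat_one P])
  moreover have "invertible_mat Q'"
    unfolding Q'_def by (rule invertible_mat_four_block_diag[OF Q one_carrier_mat invertible_mat_one])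
  ultimately have "mat_space_equiv m n ((\<lambda>M. P' * M * Q') ` S) S"
    unfolding mat_space_equiv_def using P(1) Q(1) assms(1,2)
    by (intro exI[of _ P'] exI[of _ Q']) (auto simp: P'_def Q'_def)
  moreover have "decomposed m n (r + r') s' ((\<lambda>M. P' * M * Q') ` S)"
    using T assms(1,2) lower_entry
    unfolding decomposed_def T_eq lower_space_def
    by (auto simp: le_diff_conv2 less_diff_conv2)
  moreover have "lower_space m (r + r') s' ((\<lambda>M. P' * M * Q') ` S) = lower_space (m - r) r' s' T"
    unfolding lower_space_def T_eq image_image
  proof (rule image_cong[OF refl])
    fix M assume "M \<in> S"
    then show "lower_block m (r + r') s' (P' * M * Q')
        = lower_block (m - r) r' s' (P * lower_block m r s M * Q)"
      using T assms(2) unfolding decomposed_def by (intro eq_matI) (auto simp: lower_entry algebra_simps)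
  qed
  ultimately show ?thesis using that by blast
qed

theorem mainTheorem13:
  fixes S :: "'a::field mat set"
  assumes "r \<le> m" and "1 \<le> s" and "s \<le> n"
    and "is_subspace m n S"
    and "decomposed m n r s S"
    and "column_property m n S"
  shows "column_property (m - r) s (lower_space m r s S)"
  unfolding column_property_def
proof (intro allI impI, elim conjE)
  fix r' s' T
  assume "r' \<le> m - r" "1 \<le> s'" "s' \<le> s"
    and "mat_space_equiv (m - r) s T (lower_space m r s S)" "decomposed (m - r) s r' s' T"
  moreover have "S \<subseteq> carrier_mat m n" using assms(4) unfolding is_subspace_def by blast
  ultimately obtain S' where "mat_space_equiv m n S' S" "decomposed m n (r + r') s' S'"
    and lower: "lower_space m (r + r') s' S' = lower_space (m - r) r' s' T"
    using decomposed_lift_of_lower_space_equiv assms(1,3,5) by metis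
  then have "defective (m - (r + r')) s' (lower_space m (r + r') s' S')"
    using assms(6) unfolding column_property_def decomposed_def by blast
  then show "defective (m - r - r') s' (lower_space (m - r) r' s' T)"
    by (simp add: lower diff_diff_add)
qed

end
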